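(* Let $n\ge4$. The infimum of $\operatorname{Rib}(\mathcal{U}_{w,F})$ over all folded ribbon $n$-stick unknots $\mathcal{U}_{w,F}$ whose diagram $\mathcal{U}$ is a non-degenerate $n$-gon with all fold (interior) angles satisfying $\frac{\pi}{2}\le\alpha_i<\pi$ equals $n\cot(\frac{\pi}{n})$, and it is attained when $\mathcal{U}$ is a regular $n$-gon.
   Context: Non-degenerate $n$-gon: side lengths nonzero, interior angles not equal to $\pi$. For width $w>0$, the folded ribbon $\mathcal{U}_{w,F}$ is a flat strip of width $w$ centred on $\mathcal{U}$ (boundary parallel to and at distance $w/2$ from each edge), folded at each vertex along a fold line through the vertex perpendicular to the bisector of the angle there; it is a piecewise-linear immersion of an annulus or Möbius band into the plane whose only singularities are the pairwise disjoint fold lines, with consistent crossing information; $F$ is the folding information. The folded ribbonlength is $\operatorname{Rib}(\mathcal{U}_{w,F})=\operatorname{Len}(\mathcal{U})/w$. *)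

theory Defs
  imports "HOL-Analysis.Analysis"
begin

text \<open>A closed polygon with n vertices in the plane (identified with the complex plane).
  The vertices are p 0, ..., p (n-1); indices are taken modulo n.\<close>

definition vtx :: "nat \<Rightarrow> (nat \<Rightarrow> complex) \<Rightarrow> nat \<Rightarrow> complex" where
  "vtx n p i = p (i mod n)"

definition prev_vtx :: "nat \<Rightarrow> (nat \<Rightarrow> complex) \<Rightarrow> nat \<Rightarrow> complex" where
  "prev_vtx n p i = p ((i + n - 1) mod n)"

definition next_vtx :: "nat \<Rightarrow> (nat \<Rightarrow> complex) \<Rightarrow> nat \<Rightarrow> complex" where
  "next_vtx n p i = p (Suc i mod n)"

definition edge :: "nat \<Rightarrow> (nat \<Rightarrow> complex) \<Rightarrow> nat \<Rightarrow> complex set" where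
  "edge n p i = closed_segment (vtx n p i) (next_vtx n p i)"

definition simple_polygon :: "nat \<Rightarrow> (nat \<Rightarrow> complex) \<Rightarrow> bool" where
  "simple_polygon n p \<longleftrightarrow> n \<ge> 3 \<and>
     (\<forall>i<n. \<forall>j<n. i \<noteq> j \<longrightarrow>
        (if j = Suc i mod n then edge n p i \<inter> edge n p j = {vtx n p j}
         else if i = Suc j mod n then edge n p i \<inter> edge n p j = {vtx n p i}
         else edge n p i \<inter> edge n p j = {}))"

definition polygon_length :: "nat \<Rightarrow> (nat \<Rightarrow> complex) \<Rightarrow> real" where
  "polygon_length n p = (\<Sum>i<n. cmod (next_vtx n p i - vtx n p i))"

text \<open>Signed area (shoelace formula); its sign is the orientation of the polygon.\<close>
definition signed_area :: "nat \<Rightarrow> (nat \<Rightarrow> complex) \<Rightarrow> real" where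
  "signed_area n p = (\<Sum>i<n. Im (cnj (vtx n p i) * next_vtx n p i)) / 2"

definition turning_angle :: "nat \<Rightarrow> (nat \<Rightarrow> complex) \<Rightarrow> nat \<Rightarrow> real" where
  "turning_angle n p i = Arg ((next_vtx n p i - vtx n p i) / (vtx n p i - prev_vtx n p i))"

text \<open>Interior angle at vertex i of a simple polygon: pi minus the turning angle, measured
  with respect to the positive (counterclockwise) orientation.\<close>
definition interior_angle :: "nat \<Rightarrow> (nat \<Rightarrow> complex) \<Rightarrow> nat \<Rightarrow> real" where
  "interior_angle n p i = pi - sgn (signed_area n p) * turning_angle n p i"

definition nondegenerate :: "nat \<Rightarrow> (nat \<Rightarrow> complex) \<Rightarrow> bool" where
  "nondegenerate n p \<longleftrightarrow>
     (\<forall>i<n. next_vtx n p i \<noteq> vtx n p i) \<and> (\<forall>i<n. interior_angle n p i \<noteq> pi)"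

definition bisector :: "nat \<Rightarrow> (nat \<Rightarrow> complex) \<Rightarrow> nat \<Rightarrow> complex" where
  "bisector n p i = sgn (prev_vtx n p i - vtx n p i) + sgn (next_vtx n p i - vtx n p i)"

definition fold_line :: "nat \<Rightarrow> (nat \<Rightarrow> complex) \<Rightarrow> nat \<Rightarrow> complex set" where
  "fold_line n p i = {x. inner (x - vtx n p i) (bisector n p i) = 0}"

text \<open>The part of the fold line at vertex i lying in the (open) ribbon of width w, i.e. the
  points of the fold line at distance less than w/2 from the line of the edges at vertex i
  (by symmetry of the fold the incoming and the outgoing edge give the same set).\<close>
definition fold_segment :: "nat \<Rightarrow> (nat \<Rightarrow> complex) \<Rightarrow> real \<Rightarrow> nat \<Rightarrow> complex set" where
  "fold_segment n p w i = {x \<in> fold_line n p i.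
       infdist x (affine hull {prev_vtx n p i, vtx n p i}) < w / 2}"

text \<open>Folding (crossing) information can always be chosen consistently
  and does not affect the ribbonlength.\<close>
definition folded_ribbon :: "nat \<Rightarrow> (nat \<Rightarrow> complex) \<Rightarrow> real \<Rightarrow> bool" where
  "folded_ribbon n p w \<longleftrightarrow> w > 0 \<and>
     (\<forall>i<n. \<forall>j<n. i \<noteq> j \<longrightarrow> fold_segment n p w i \<inter> fold_segment n p w j = {})"

definition ribbonlength :: "nat \<Rightarrow> (nat \<Rightarrow> complex) \<Rightarrow> real \<Rightarrow> real" where
  "ribbonlength n p w = polygon_length n p / w"

definition regular_polygon :: "nat \<Rightarrow> (nat \<Rightarrow> complex) \<Rightarrow> bool" where
  "regular_polygon n p \<longleftrightarrow> (\<exists>c r \<theta> s. r > 0 \<and> (s = 1 \<or> s = -1) \<and>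
     (\<forall>i<n. p i = c + complex_of_real r * cis (\<theta> + s * 2 * pi * real i / real n)))"

definition admissible :: "nat \<Rightarrow> (nat \<Rightarrow> complex) \<Rightarrow> bool" where
  "admissible n p \<longleftrightarrow> simple_polygon n p \<and> nondegenerate n p \<and>
     (\<forall>i<n. pi / 2 \<le> interior_angle n p i \<and> interior_angle n p i < pi)"

end

theory Submission
  imports Defs
begin

(* Orient the polygon so that every turning angle \<tau>_i = \<pi> - \<alpha>_i lies in (0, \<pi>/2]; for a
   simple polygon these angles add up to 2\<pi>.  In a ribbon of width w the fold lines at the two
   ends of edge i must not meet inside the ribbon, which forces the edge to have length at least
   (w/2) (cot (\<tau>_i/2) + cot (\<tau>_(i+1)/2)).  Summing over the edges gives
   Len \<ge> w \<Sum> cot (\<tau>_i/2), and Jensen's inequality for the convex function cot on (0, \<pi>/2)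
   together with \<Sum> \<tau>_i/2 = \<pi> bounds the sum below by n cot (\<pi>/n).  For a regular n-gon of
   circumradius r the fold lines are the tangents of the circumcircle at the vertices; with
   w = 2 r sin (\<pi>/n) tan (\<pi>/n) neighbouring fold segments just fail to meet, and the bound is
   attained. *)

section \<open>Arguments of quotients\<close>

lemma Arg_divide_eq_diff:
  assumes "z \<noteq> 0" "w \<noteq> 0" "\<bar>Arg z - Arg w\<bar> < pi"
  shows "Arg (z / w) = Arg z - Arg w"
  using Arg_divide'[OF assms(1,2)] assms(3) by auto

lemma sgn_divide_complex: "z \<noteq> 0 \<Longrightarrow> w \<noteq> 0 \<Longrightarrow> sgn ((z::complex) / w) = sgn z / sgn w"
  by (simp add: sgn_div_norm norm_divide field_simps)

lemma Arg_divide_in_half_plane: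
  assumes "Re (z * cnj a) > 0" "Re (w * cnj a) > 0"
  shows "Arg (z / w) = Arg (z * cnj a) - Arg (w * cnj a)"
proof -
  have "a \<noteq> 0" using assms by auto
  then have "z / w = (z * cnj a) / (w * cnj a)" by simp
  moreover have "\<bar>Arg (z * cnj a)\<bar> < pi/2" "\<bar>Arg (w * cnj a)\<bar> < pi/2"
    using assms Arg_Re_pos by auto
  moreover have "z * cnj a \<noteq> 0" "w * cnj a \<noteq> 0" using assms by auto
  ultimately show ?thesis using Arg_divide_eq_diff[of "z * cnj a" "w * cnj a"] by auto
qed

lemma Arg_exterior_angle:
  assumes "B \<noteq> A" "C \<noteq> B" "Arg ((C - B) / (B - A)) \<noteq> pi"
  shows "Arg ((C - B) / (B - A)) = Arg ((C - A) / (B - A)) + Arg ((C - B) / (C - A))"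
proof -
  define q where "q = (C - B) / (B - A)"
  have q0: "q \<noteq> 0" using assms by (simp add: q_def)
  have q1: "1 + q \<noteq> 0"
  proof
    assume "1 + q = 0"
    then have "q = -1" by (simp add: add_eq_0_iff)
    then show False using assms(3) by (simp add: q_def Arg_eq_pi)
  qed
  have "\<bar>Arg q - Arg (1 + q)\<bar> < pi"
  proof (cases "Im q = 0")
    case True
    then have "Re q > 0"
      using assms(3) q0 Arg_eq_pi[of q] complex_eq_iff[of q 0] by (auto simp: q_def)
    then have "Arg q = 0" "Arg (1 + q) = 0"
      using True by (auto simp: Arg_eq_0 complex_is_Real_iff)
    then show ?thesis by simp
  next
    case False
    then show ?thesis
      using Arg_lt_pi[of q] Arg_lt_pi[of "1 + q"] Arg_neg_iff[of q] Arg_neg_iff[of "1 + q"]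
        Arg_bounded[of q] Arg_bounded[of "1 + q"] by (cases "Im q > 0") auto
  qed
  then have Arg_q: "Arg (q / (1 + q)) = Arg q - Arg (1 + q)"
    using Arg_divide_eq_diff q0 q1 by auto
  have sum: "(C - A) / (B - A) = 1 + q"
    using assms(1) by (simp add: q_def field_simps)
  then have "C \<noteq> A" using q1 by auto
  have "q / (1 + q) = ((C - B) / (B - A)) / ((C - A) / (B - A))"
    unfolding sum q_def ..
  then have quot: "(C - B) / (C - A) = q / (1 + q)"
    using assms(1) \<open>C \<noteq> A\<close> by simp
  have "Arg ((C - B) / (B - A)) = Arg (1 + q) + Arg (q / (1 + q))"
    using Arg_q by (simp add: q_def)
  then show ?thesis unfolding sum quot .
qed

text \<open>For disjoint segments \<open>[A, B]\<close> and \<open>[C, D]\<close> the angles of the quadrilateral \<open>A C B D\<close>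
  add up without wrapping around, because a separating line puts all four differences from
  \<open>{A, B}\<close> to \<open>{C, D}\<close> into one open half-plane.\<close>
lemma Arg_divide_disjoint_segments:
  assumes "closed_segment A B \<inter> closed_segment C D = {}"
  shows "Arg ((D - A) / (C - A)) + Arg ((D - B) / (D - A))
       = Arg ((C - B) / (C - A)) + Arg ((D - B) / (C - B))"
proof -
  obtain a b where ab: "\<forall>x\<in>closed_segment A B. inner a x < b"
     "\<forall>x\<in>closed_segment C D. inner a x > b"
    using separating_hyperplane_closed_compact[of "closed_segment A B" "closed_segment C D"] assms
    by auto
  have pos: "Re ((y - x) * cnj a) > 0" if "x \<in> {A, B}" "y \<in> {C, D}" for x y
  proof -
    have "inner a x < b" "inner a y > b" using ab that by auto
    then show ?thesis by (simp add: inner_complex_def algebra_simps)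
  qed
  show ?thesis
    using Arg_divide_in_half_plane[of _ a] pos by (simp add: Arg_divide_in_half_plane[of _ a])
qed

lemma Arg_upper_half_plane:
  assumes "z \<noteq> 0" "0 < Im z \<or> Im z = 0 \<and> 0 \<le> Re z"
  shows "0 \<le> Arg z \<and> Arg z < pi"
proof -
  have "0 \<le> Arg z" "Arg z \<noteq> pi"
    using assms Arg_less_0[of z] Arg_eq_pi[of z] by auto
  then show ?thesis using Arg_le_pi[of z] by (simp add: less_le)
qed

text \<open>At a lowest vertex \<open>0\<close> of a polygon with neighbours \<open>a\<close> and \<open>b\<close>, the left-hand side is
  the fan angle \<open>Arg a - Arg b\<close> plus the turning angle at \<open>0\<close>.\<close>
lemma Arg_closing_angle:
  fixes a b :: complex
  assumes "a \<noteq> 0" "b \<noteq> 0" "0 \<le> Arg a" "Arg a < pi" "0 \<le> Arg b" "Arg b < pi"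
    "Arg (b / (- a)) \<noteq> pi"
  shows "Arg a - Arg b + Arg (b / (- a)) = pi \<or> Arg a - Arg b + Arg (b / (- a)) = - pi"
proof -
  define \<gamma> where "\<gamma> = Arg a - Arg b + Arg (b / (- a))"
  have "cis \<gamma> = cis (Arg a) / cis (Arg b) * cis (Arg (b / (- a)))"
    by (simp add: \<gamma>_def cis_mult cis_divide)
  also have "\<dots> = sgn a / sgn b * sgn (b / (- a))"
    using assms(1,2) by (simp add: cis_Arg)
  also have "\<dots> = -1"
    using assms(1,2) by (simp add: sgn_divide_complex sgn_minus sgn_zero_iff field_simps)
  finally have "Re (cis \<gamma>) = -1" by simp
  then have "cos \<gamma> = -1" by simp
  then obtain k :: int where k: "\<gamma> = (2 * real_of_int k + 1) * pi"
    using cos_eq_minus1 by blast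
  have "\<bar>\<gamma>\<bar> < 2 * pi"
    using assms(3-7) Arg_bounded[of "b / (- a)"] unfolding \<gamma>_def abs_less_iff by auto
  then have "\<bar>2 * real_of_int k + 1\<bar> < 2"
    using k by (simp add: abs_mult)
  then have "k = 0 \<or> k = -1" by linarith
  then show ?thesis using k unfolding \<gamma>_def by auto
qed

section \<open>Vertices modulo \<open>n\<close>\<close>

lemma prev_vtx_eq: "prev_vtx n p i = vtx n p (i + n - 1)"
  and next_vtx_eq: "next_vtx n p i = vtx n p (Suc i)"
  by (simp_all add: prev_vtx_def next_vtx_def vtx_def)

lemma vtx_mod [simp]: "vtx n p (i mod n) = vtx n p i"
  and vtx_add_period [simp]: "vtx n p (i + n) = vtx n p i"
  by (simp_all add: vtx_def)

lemma prev_vtx_mod [simp]: "prev_vtx n p (i mod n) = prev_vtx n p i"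
proof (cases "n = 0")
  case False
  then have "(i mod n + n - 1) mod n = (i + n - 1) mod n"
    by (metis Nat.add_diff_assoc One_nat_def Suc_leI mod_add_left_eq not_gr0)
  then show ?thesis by (simp add: prev_vtx_def)
qed simp

lemma next_vtx_mod [simp]: "next_vtx n p (i mod n) = next_vtx n p i"
  by (simp add: next_vtx_def mod_Suc_eq)

lemma edge_mod [simp]: "edge n p (i mod n) = edge n p i"
  by (simp add: edge_def)

lemma fold_segment_mod [simp]: "fold_segment n p w (i mod n) = fold_segment n p w i"
  by (simp add: fold_segment_def fold_line_def bisector_def)

lemma turning_angle_vtx:
  "turning_angle n p i = Arg ((vtx n p (Suc i) - vtx n p i) / (vtx n p i - vtx n p (i + n - 1)))"
  by (simp add: turning_angle_def prev_vtx_eq next_vtx_eq)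

lemma turning_angle_mod [simp]: "turning_angle n p (i mod n) = turning_angle n p i"
  by (simp add: turning_angle_def)

lemma turning_angle_add_period: "turning_angle n p (i + n) = turning_angle n p i"
  using turning_angle_mod[of n p "i + n"] turning_angle_mod[of n p i] by simp

lemma nondegenerate_vtx_Suc_ne:
  assumes "nondegenerate n p" "n > 0"
  shows "vtx n p (Suc k) \<noteq> vtx n p k"
  using assms next_vtx_mod[of n p k] unfolding nondegenerate_def
  by (metis mod_less_divisor next_vtx_eq vtx_mod)

lemma sum_periodic_shift:
  fixes f :: "nat \<Rightarrow> 'a::cancel_comm_monoid_add"
  assumes "\<And>k. f (k + n) = f k"
  shows "(\<Sum>k<n. f (k + m)) = (\<Sum>k<n. f k)"
proof (induction m)
  case (Suc m)
  have "f m + (\<Sum>k<n. f (k + Suc m)) = (\<Sum>k<Suc n. f (k + m))"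
    by (subst sum.lessThan_Suc_shift) simp
  also have "\<dots> = (\<Sum>k<n. f (k + m)) + f m"
    using assms[of m] by (simp add: add.commute)
  finally show ?case using Suc by (simp add: add.commute)
qed simp

lemma simple_polygon_edges_disjoint:
  assumes "simple_polygon n p" "k + 2 \<le> l" "l + 2 \<le> k + n"
  shows "edge n p k \<inter> edge n p l = {}"
proof -
  define I J d where "I = k mod n" and "J = l mod n" and "d = l - k"
  have n: "n \<ge> 4" "I < n" "J < n" using assms unfolding I_def J_def by auto
  have "l = k + d" using assms(2) by (simp add: d_def)
  then have J: "J = (I + d) mod n" unfolding I_def J_def by (simp add: mod_add_left_eq)
  have cancel: "a mod n = b mod n" if "(I + a) mod n = (I + b) mod n" for a b
    using that by (simp add: mod_eq_iff_dvd_symdiff_nat)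
  have "I \<noteq> J" "J \<noteq> Suc I mod n" "I \<noteq> Suc J mod n"
    using cancel[of d 0] cancel[of d 1] cancel[of 0 "Suc d"] assms n J
    by (auto simp: d_def mod_Suc_eq)
  then have "edge n p I \<inter> edge n p J = {}"
    using assms(1) n unfolding simple_polygon_def by metis
  then show ?thesis unfolding I_def J_def by simp
qed

lemma simple_polygon_vtx_distinct:
  assumes "simple_polygon n p" "nondegenerate n p" "I < n" "J < n" "I \<noteq> J"
  shows "vtx n p I \<noteq> vtx n p J"
proof (cases "J = Suc I mod n \<or> I = Suc J mod n")
  case True
  have "next_vtx n p K \<noteq> vtx n p K" if "K < n" for K
    using assms(2) that unfolding nondegenerate_def by auto
  then show ?thesis
    using True assms(3,4) unfolding next_vtx_def vtx_def by (metis mod_less)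
next
  case False
  then have "edge n p I \<inter> edge n p J = {}"
    using assms unfolding simple_polygon_def by metis
  moreover have "vtx n p I \<in> edge n p I" "vtx n p J \<in> edge n p J"
    by (simp_all add: edge_def)
  ultimately show ?thesis by auto
qed

lemma exists_lowest_vertex:
  fixes p :: "nat \<Rightarrow> complex"
  assumes "n > 0"
  obtains m where "m < n"
    "\<And>k. k < n \<Longrightarrow> Im (p m) < Im (p k) \<or> Im (p m) = Im (p k) \<and> Re (p m) \<le> Re (p k)"
proof -
  define k0 where "k0 = arg_min_on (\<lambda>k. Im (p k)) {..<n}"
  define B where "B = {k. k < n \<and> Im (p k) = Im (p k0)}"
  define m where "m = arg_min_on (\<lambda>k. Re (p k)) B"
  have k0: "k0 < n" "\<And>k. k < n \<Longrightarrow> Im (p k0) \<le> Im (p k)"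
    using assms arg_min_least[of "{..<n}" _ "\<lambda>k. Im (p k)"] arg_min_if_finite(1)[of "{..<n}"]
    unfolding k0_def by auto
  then have "finite B" "B \<noteq> {}" unfolding B_def by auto
  then have "m \<in> B" "\<And>k. k \<in> B \<Longrightarrow> Re (p m) \<le> Re (p k)"
    unfolding m_def by (auto intro: arg_min_if_finite(1) arg_min_least)
  then show ?thesis using that k0 unfolding B_def by force
qed

section \<open>Total turning of a simple polygon\<close>

lemma sum_row_shift:
  fixes H V :: "nat \<Rightarrow> nat \<Rightarrow> real"
  assumes "a \<le> b"
    and "\<And>j. a \<le> j \<Longrightarrow> j < b \<Longrightarrow> H i j + V i (Suc j) = V i j + H (Suc i) j"
  shows "(\<Sum>j=a..<b. H i j) = (\<Sum>j=a..<b. H (Suc i) j) + V i a - V i b"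
proof -
  have "(\<Sum>j=a..<b. H i j) = (\<Sum>j=a..<b. H (Suc i) j - (V i (Suc j) - V i j))"
    using assms(2) by (intro sum.cong) (auto simp: algebra_simps)
  also have "\<dots> = (\<Sum>j=a..<b. H (Suc i) j) + V i a - V i b"
    using sum_Suc_diff'[OF assms(1), of "V i"] by (simp add: sum_subtractf)
  finally show ?thesis .
qed

text \<open>Double counting over the pairs of edges of a closed \<open>n\<close>-gon: \<open>H i j\<close> and \<open>V i j\<close> play the
  role of the angles under which edge \<open>j\<close> is seen from vertex \<open>i\<close> and edge \<open>i\<close> from vertex
  \<open>j\<close>, and \<open>\<tau>\<close> of the turning angles.\<close>
lemma sum_turning_grid:
  fixes H V :: "nat \<Rightarrow> nat \<Rightarrow> real" and \<tau> :: "nat \<Rightarrow> real"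
  assumes n: "n \<ge> 4"
    and square: "\<And>i j. i + 2 \<le> j \<Longrightarrow> j \<le> n - 1 \<Longrightarrow> j - i \<le> n - 2 \<Longrightarrow>
                   H i j + V i (Suc j) = V i j + H (Suc i) j"
    and triangle: "\<And>i. i \<le> n - 2 \<Longrightarrow> H i (Suc i) + V i (i + 2) = \<tau> (Suc i)"
    and triangle0: "H 1 (n - 1) + V 0 (n - 1) = \<tau> 0"
  shows "(\<Sum>k<n. \<tau> k) = (\<Sum>j=1..<n-1. H 0 j) + (\<Sum>k=1..<n-1. V k n) + 2 * \<tau> 0"
proof -
  define r where "r i = (\<Sum>j=Suc i..<n. H i j)" for i
  have step: "r i - r (Suc i) = \<tau> (Suc i) - V i n" if "1 \<le> i" "i \<le> n - 2" for i
  proof -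
    have "r i = H i (Suc i) + (\<Sum>j=i+2..<n. H i j)"
      unfolding r_def using that n by (simp add: sum.atLeast_Suc_lessThan)
    also have "(\<Sum>j=i+2..<n. H i j) = r (Suc i) + V i (i + 2) - V i n"
      unfolding r_def by (subst sum_row_shift) (use that n square in auto)
    finally show ?thesis using triangle[of i] that by simp
  qed
  have "r 1 - r (n - 1) = (\<Sum>i=1..<n-1. r i - r (Suc i))"
    using sum_Suc_diff'[of 1 "n - 1" "\<lambda>i. - r i"] n by simp
  also have "\<dots> = (\<Sum>i=1..<n-1. \<tau> (Suc i) - V i n)"
    using step by (intro sum.cong) auto
  finally have r1: "r 1 = (\<Sum>i=2..<n. \<tau> i) - (\<Sum>k=1..<n-1. V k n)"
    using n by (simp add: r_def sum_subtractf sum.shift_bounds_Suc_ivl[symmetric] numeral_2_eq_2)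
  have "(\<Sum>j=1..<n-1. H 0 j) = H 0 1 + (\<Sum>j=2..<n-1. H 0 j)"
    using n by (simp add: sum.atLeast_Suc_lessThan numeral_2_eq_2)
  also have "(\<Sum>j=2..<n-1. H 0 j) = (\<Sum>j=2..<n-1. H 1 j) + V 0 2 - V 0 (n - 1)"
    by (subst sum_row_shift) (use n square in auto)
  also have "(\<Sum>j=2..<n-1. H 1 j) = r 1 - H 1 (n - 1)"
  proof -
    have "{2..<n} = insert (n - 1) {2..<n-1}" using n by auto
    then show ?thesis unfolding r_def by (simp add: numeral_2_eq_2)
  qed
  finally have H0: "(\<Sum>j=1..<n-1. H 0 j) = \<tau> 1 + r 1 - \<tau> 0"
    using triangle[of 0] triangle0 by (simp add: numeral_2_eq_2)
  have "{..<n} = insert 0 (insert 1 {2..<n})" using n by auto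
  then have "(\<Sum>k<n. \<tau> k) = \<tau> 0 + \<tau> 1 + (\<Sum>k=2..<n. \<tau> k)" by simp
  then show ?thesis using H0 r1 by simp
qed

lemma turning_sum_fan:
  fixes W :: "nat \<Rightarrow> complex"
  assumes n: "n \<ge> 4"
    and periodic: "\<And>k. W (k + n) = W k"
    and edge_ne: "\<And>k. W (Suc k) \<noteq> W k"
    and disjoint: "\<And>i j. i + 2 \<le> j \<Longrightarrow> j < n \<Longrightarrow> j - i \<le> n - 2 \<Longrightarrow>
                     closed_segment (W i) (W (Suc i)) \<inter> closed_segment (W j) (W (Suc j)) = {}"
    and not_pi: "\<And>k. Arg ((W (Suc k) - W k) / (W k - W (k + n - 1))) \<noteq> pi"
  shows "(\<Sum>k<n. Arg ((W (Suc k) - W k) / (W k - W (k + n - 1))))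
       = 2 * ((\<Sum>j=1..<n-1. Arg ((W (Suc j) - W 0) / (W j - W 0)))
              + Arg ((W 1 - W 0) / (W 0 - W (n - 1))))"
proof -
  define \<tau> where "\<tau> k = Arg ((W (Suc k) - W k) / (W k - W (k + n - 1)))" for k
  define H where "H i j = Arg ((W (Suc j) - W i) / (W j - W i))" for i j
  define V where "V i j = Arg ((W j - W (Suc i)) / (W j - W i))" for i j
  have square: "H i j + V i (Suc j) = V i j + H (Suc i) j"
    if "i + 2 \<le> j" "j \<le> n - 1" "j - i \<le> n - 2" for i j
    using Arg_divide_disjoint_segments[OF disjoint[of i j]] that n
    unfolding H_def V_def by auto
  have triangle: "H i (Suc i) + V i (i + 2) = \<tau> (Suc i)" for i
    using Arg_exterior_angle[of "W (Suc i)" "W i" "W (Suc (Suc i))"] edge_ne not_pi[of "Suc i"]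
    unfolding H_def V_def \<tau>_def by (simp add: periodic numeral_2_eq_2)
  have W_n: "W n = W 0" "W (Suc n) = W 1"
    using periodic[of 0] periodic[of 1] by simp_all
  have flip: "(a - b) / (c - d) = (b - a) / (d - c)" for a b c d :: complex
    by (metis minus_diff_eq minus_divide_divide)
  have triangle0: "H 1 (n - 1) + V 0 (n - 1) = \<tau> 0"
  proof -
    have "H 1 (n - 1) = V (n - 1) (Suc n)" "V 0 (n - 1) = H (n - 1) n"
      unfolding H_def V_def using n W_n by (simp_all add: flip)
    moreover have "\<tau> n = \<tau> 0"
      unfolding \<tau>_def using periodic[of "n - 1"] n W_n by simp
    ultimately show ?thesis using triangle[of "n - 1"] n by (simp add: numeral_2_eq_2)
  qed
  have "(\<Sum>k<n. \<tau> k) = (\<Sum>j=1..<n-1. H 0 j) + (\<Sum>k=1..<n-1. V k n) + 2 * \<tau> 0"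
    by (rule sum_turning_grid[OF n]) (use square triangle triangle0 in auto)
  moreover have "V k n = H 0 k" for k
    unfolding H_def V_def W_n by (simp add: flip)
  ultimately show ?thesis unfolding \<tau>_def H_def by simp
qed

text \<open>Seen from a lowest vertex \<open>W 0\<close> all other vertices lie in the upper half-plane, so the
  fan angles at \<open>W 0\<close> telescope without wrapping around.\<close>
lemma turning_sum_from_lowest_vertex:
  fixes W :: "nat \<Rightarrow> complex" and s :: real
  assumes n: "n \<ge> 4"
    and periodic: "\<And>k. W (k + n) = W k"
    and edge_ne: "\<And>k. W (Suc k) \<noteq> W k"
    and disjoint: "\<And>i j. i + 2 \<le> j \<Longrightarrow> j < n \<Longrightarrow> j - i \<le> n - 2 \<Longrightarrow>
                     closed_segment (W i) (W (Suc i)) \<inter> closed_segment (W j) (W (Suc j)) = {}"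
    and lowest: "\<And>j. 1 \<le> j \<Longrightarrow> j \<le> n - 1 \<Longrightarrow>
                   W j \<noteq> W 0 \<and> 0 \<le> Arg (W j - W 0) \<and> Arg (W j - W 0) < pi"
    and s: "s = 1 \<or> s = -1"
    and turn: "\<And>k. 0 < s * Arg ((W (Suc k) - W k) / (W k - W (k + n - 1)))
                    \<and> s * Arg ((W (Suc k) - W k) / (W k - W (k + n - 1))) < pi"
  shows "s * (\<Sum>k<n. Arg ((W (Suc k) - W k) / (W k - W (k + n - 1)))) = 2 * pi"
proof -
  define \<tau> where "\<tau> k = Arg ((W (Suc k) - W k) / (W k - W (k + n - 1)))" for k
  define g where "g j = Arg (W j - W 0)" for j
  have \<tau>_bound: "\<bar>\<tau> k\<bar> < pi" for k
    using turn[of k] s unfolding \<tau>_def by auto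
  have not_pi: "\<tau> k \<noteq> pi" for k
    using \<tau>_bound[of k] by auto
  have "(\<Sum>k<n. \<tau> k) = 2 * ((\<Sum>j=1..<n-1. Arg ((W (Suc j) - W 0) / (W j - W 0))) + \<tau> 0)"
    using turning_sum_fan[OF n periodic edge_ne disjoint not_pi[unfolded \<tau>_def]]
    unfolding \<tau>_def by simp
  also have "(\<Sum>j=1..<n-1. Arg ((W (Suc j) - W 0) / (W j - W 0))) = (\<Sum>j=1..<n-1. g (Suc j) - g j)"
  proof (rule sum.cong[OF refl])
    fix j assume "j \<in> {1..<n-1}"
    then have "W (Suc j) \<noteq> W 0 \<and> 0 \<le> g (Suc j) \<and> g (Suc j) < pi" "W j \<noteq> W 0 \<and> 0 \<le> g j \<and> g j < pi"
      using lowest unfolding g_def by auto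
    then show "Arg ((W (Suc j) - W 0) / (W j - W 0)) = g (Suc j) - g j"
      unfolding g_def by (intro Arg_divide_eq_diff) auto
  qed
  also have "\<dots> = g (n - 1) - g 1"
    using n by (subst sum_Suc_diff') auto
  finally have sum_eq: "(\<Sum>k<n. \<tau> k) = 2 * (g (n - 1) - g 1 + \<tau> 0)" .
  have "g (n - 1) - g 1 + \<tau> 0 = pi \<or> g (n - 1) - g 1 + \<tau> 0 = - pi"
    using Arg_closing_angle[of "W (n - 1) - W 0" "W 1 - W 0"] lowest[of 1] lowest[of "n - 1"] n
      not_pi[of 0]
    unfolding g_def \<tau>_def by simp
  then have "(\<Sum>k<n. \<tau> k) = 2 * pi \<or> (\<Sum>k<n. \<tau> k) = - 2 * pi"
    using sum_eq by auto
  moreover have "0 < s * (\<Sum>k<n. \<tau> k)"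
    unfolding sum_distrib_left using turn n by (intro sum_pos) (auto simp: \<tau>_def lessThan_empty_iff)
  ultimately show ?thesis using s unfolding \<tau>_def by auto
qed

lemma turning_sum_simple_polygon:
  assumes n: "n \<ge> 4" and simple: "simple_polygon n p" and nd: "nondegenerate n p"
    and s: "s = 1 \<or> s = -1"
    and turn: "\<And>i. i < n \<Longrightarrow> 0 < s * turning_angle n p i \<and> s * turning_angle n p i < pi"
  shows "s * (\<Sum>i<n. turning_angle n p i) = 2 * pi"
proof -
  obtain m where m: "m < n"
    "\<And>k. k < n \<Longrightarrow> Im (p m) < Im (p k) \<or> Im (p m) = Im (p k) \<and> Re (p m) \<le> Re (p k)"
    using exists_lowest_vertex n by (metis not_numeral_le_zero not_gr0)
  define W where "W k = vtx n p (k + m)" for k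
  have turning_W: "Arg ((W (Suc k) - W k) / (W k - W (k + n - 1))) = turning_angle n p (k + m)" for k
    unfolding W_def turning_angle_vtx using n by (simp add: add_ac)
  have "s * (\<Sum>k<n. Arg ((W (Suc k) - W k) / (W k - W (k + n - 1)))) = 2 * pi"
  proof (rule turning_sum_from_lowest_vertex[OF n _ _ _ _ s])
    show "W (k + n) = W k" for k
      unfolding W_def by (metis vtx_add_period add.assoc add.commute)
    show "W (Suc k) \<noteq> W k" for k
      using nondegenerate_vtx_Suc_ne[OF nd] n unfolding W_def by simp
    show "closed_segment (W i) (W (Suc i)) \<inter> closed_segment (W j) (W (Suc j)) = {}"
      if "i + 2 \<le> j" "j < n" "j - i \<le> n - 2" for i j
      using simple_polygon_edges_disjoint[OF simple, of "i + m" "j + m"] that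
      unfolding W_def edge_def next_vtx_eq by simp
    show "W j \<noteq> W 0 \<and> 0 \<le> Arg (W j - W 0) \<and> Arg (W j - W 0) < pi"
      if "1 \<le> j" "j \<le> n - 1" for j
    proof -
      define J where "J = (j + m) mod n"
      have "\<not> n dvd j" using that n by (auto dest: dvd_imp_le)
      then have "J \<noteq> m" "J < n"
        using m n mod_eq_iff_dvd_symdiff_nat[of "j + m" n m] unfolding J_def by auto
      then have "p J \<noteq> p m"
        using simple_polygon_vtx_distinct[OF simple nd] m by (metis vtx_def mod_less)
      moreover have "W j = p J" "W 0 = p m" using m unfolding W_def J_def by (simp_all add: vtx_def)
      ultimately show ?thesis
        using m(2)[OF \<open>J < n\<close>] by (intro conjI Arg_upper_half_plane) auto
    qed
    show "0 < s * Arg ((W (Suc k) - W k) / (W k - W (k + n - 1)))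
        \<and> s * Arg ((W (Suc k) - W k) / (W k - W (k + n - 1))) < pi" for k
      using turn[of "(k + m) mod n"] n unfolding turning_W by simp
  qed
  moreover have "(\<Sum>k<n. turning_angle n p (k + m)) = (\<Sum>i<n. turning_angle n p i)"
    by (rule sum_periodic_shift) (rule turning_angle_add_period)
  ultimately show ?thesis unfolding turning_W by simp
qed

section \<open>Fold lines and edge lengths\<close>

lemma inner_complex_eq_Re: "inner x (y::complex) = Re (x * cnj y)"
  by (simp add: inner_complex_def)

lemma sgn_eq_sgn_mult_cis_Arg:
  assumes "z \<noteq> 0" "w \<noteq> 0"
  shows "sgn z = sgn w * cis (Arg (z / w))"
  using assms by (simp add: cis_Arg sgn_divide_complex sgn_zero_iff)

lemma complex_of_real_cmod_mult_sgn: "of_real (cmod z) * sgn z = z"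
  by (cases "z = 0") (simp_all add: sgn_div_norm scaleR_conv_of_real)

lemma sgn_mult_cnj_self: "z \<noteq> 0 \<Longrightarrow> sgn z * cnj (sgn z) = 1"
  using complex_norm_square[of "sgn z"] by (simp add: norm_sgn)

text \<open>The fold line at a vertex is spanned by the direction halfway between the incoming
  and the outgoing edge.\<close>
lemma fold_line_halfway_point:
  assumes "prev_vtx n p i \<noteq> vtx n p i" "next_vtx n p i \<noteq> vtx n p i"
  shows "vtx n p i + of_real \<rho> * cis (turning_angle n p i / 2) * sgn (vtx n p i - prev_vtx n p i)
           \<in> fold_line n p i"
proof -
  define a t where "a = sgn (vtx n p i - prev_vtx n p i)" and "t = turning_angle n p i"
  have "sgn (next_vtx n p i - vtx n p i) = a * cis t"
    unfolding a_def t_def turning_angle_def using assms by (intro sgn_eq_sgn_mult_cis_Arg) auto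
  moreover have "sgn (prev_vtx n p i - vtx n p i) = - a"
    unfolding a_def by (metis minus_diff_eq sgn_minus)
  ultimately have bisector: "bisector n p i = a * (cis t - 1)"
    unfolding bisector_def by (simp add: algebra_simps)
  have "of_real \<rho> * cis (t / 2) * a * cnj (bisector n p i)
      = of_real \<rho> * (a * cnj a) * (cis (t / 2) * (cis (- t) - 1))"
    unfolding bisector by (simp add: cis_cnj algebra_simps)
  also have "a * cnj a = 1" using assms(1) unfolding a_def by (intro sgn_mult_cnj_self) auto
  also have "cis (t / 2) * (cis (- t) - 1) = cis (- (t / 2)) - cis (t / 2)"
    by (simp add: cis_mult algebra_simps)
  finally have eq: "of_real \<rho> * cis (t / 2) * a * cnj (bisector n p i)
      = of_real \<rho> * 1 * (cis (- (t / 2)) - cis (t / 2))" .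
  have "inner (of_real \<rho> * cis (t / 2) * a) (bisector n p i) = 0"
    unfolding inner_complex_eq_Re eq by simp
  then show ?thesis unfolding fold_line_def a_def t_def by simp
qed

lemma infdist_affine_hull_2_le:
  fixes q v :: complex
  assumes "q \<noteq> v"
  shows "infdist (v + of_real \<rho> * cis \<theta> * sgn (v - q)) (affine hull {q, v}) \<le> \<bar>\<rho> * sin \<theta>\<bar>"
proof -
  define a where "a = sgn (v - q)"
  have norm_a: "cmod a = 1" using assms by (simp add: a_def norm_sgn)
  have "v + of_real (\<rho> * cos \<theta>) * a = q + (1 + \<rho> * cos \<theta> / cmod (v - q)) *\<^sub>R (v - q)"
    unfolding a_def sgn_div_norm scaleR_conv_of_real using assms by (simp add: field_simps)
  then have foot: "v + of_real (\<rho> * cos \<theta>) * a \<in> affine hull {q, v}"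
    unfolding affine_hull_2_alt by blast
  have "v + of_real \<rho> * cis \<theta> * a - (v + of_real (\<rho> * cos \<theta>) * a) = \<i> * of_real (\<rho> * sin \<theta>) * a"
    by (simp add: complex_eq_iff algebra_simps)
  then have "dist (v + of_real \<rho> * cis \<theta> * a) (v + of_real (\<rho> * cos \<theta>) * a) = \<bar>\<rho> * sin \<theta>\<bar>"
    using norm_a by (simp add: dist_norm norm_mult abs_mult)
  then show ?thesis using infdist_le[OF foot, of "v + of_real \<rho> * cis \<theta> * a"] unfolding a_def
    by linarith
qed

lemma fold_segment_halfway_point:
  assumes "prev_vtx n p i \<noteq> vtx n p i" "next_vtx n p i \<noteq> vtx n p i"
    "\<bar>\<rho> * sin (turning_angle n p i / 2)\<bar> < w / 2"
  shows "vtx n p i + of_real \<rho> * cis (turning_angle n p i / 2) * sgn (vtx n p i - prev_vtx n p i)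
           \<in> fold_segment n p w i"
proof -
  have "infdist (vtx n p i + of_real \<rho> * cis (turning_angle n p i / 2) * sgn (vtx n p i - prev_vtx n p i))
      (affine hull {prev_vtx n p i, vtx n p i}) < w / 2"
    using infdist_affine_hull_2_le[OF assms(1)] assms(3) by (rule le_less_trans)
  then show ?thesis
    using fold_line_halfway_point[OF assms(1,2)] unfolding fold_segment_def by simp
qed

text \<open>The fold lines at the two ends of an edge of length \<open>h cot c + h cot c'\<close> meet at distance
  \<open>h\<close> from the edge.\<close>
lemma fold_lines_meet:
  assumes "s = 1 \<or> s = -1" "sin c \<noteq> 0" "sin c' \<noteq> 0"
  shows "of_real (h / sin c) * cis (- (s * c))
    = of_real (h * cot c + h * cot c') + of_real (- h / sin c') * cis (s * c')"
  using assms by (auto simp: complex_eq_iff cot_def)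

lemma fold_segments_meet:
  assumes n: "n > 0" and nd: "nondegenerate n p" and s: "s = 1 \<or> s = -1"
    and sin_pos: "sin (s * turning_angle n p i / 2) > 0" "sin (s * turning_angle n p (Suc i) / 2) > 0"
    and h: "0 < h" "h < w / 2"
    and length: "cmod (next_vtx n p i - vtx n p i)
      = h * cot (s * turning_angle n p i / 2) + h * cot (s * turning_angle n p (Suc i) / 2)"
  shows "fold_segment n p w i \<inter> fold_segment n p w (Suc i) \<noteq> {}"
proof -
  define t0 t1 where "t0 = turning_angle n p i" and "t1 = turning_angle n p (Suc i)"
  define c c' where "c = s * t0 / 2" and "c' = s * t1 / 2"
  define v0 v1 vp where "v0 = vtx n p i" and "v1 = vtx n p (Suc i)" and "vp = prev_vtx n p i"
  define u where "u = sgn (v1 - v0)"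
  have half: "t0 / 2 = s * c" "t1 / 2 = s * c'"
    using s unfolding c_def c'_def by auto
  have "vtx n p (Suc (i + n - 1)) = v0" using n by (simp add: v0_def)
  then have ne: "v1 \<noteq> v0" "vp \<noteq> v0" "vtx n p (Suc (Suc i)) \<noteq> v1"
    using nondegenerate_vtx_Suc_ne[OF nd n] unfolding v0_def v1_def vp_def prev_vtx_eq by metis+
  have v1: "v1 = v0 + of_real (h * cot c + h * cot c') * u"
    using length unfolding u_def v0_def v1_def c_def c'_def t0_def t1_def next_vtx_eq
    by (metis complex_of_real_cmod_mult_sgn diff_add_cancel add.commute)
  have "u = sgn (v0 - vp) * cis t0"
    unfolding u_def t0_def turning_angle_def v0_def v1_def vp_def next_vtx_eq[symmetric]
    using ne by (intro sgn_eq_sgn_mult_cis_Arg) (auto simp: v0_def v1_def vp_def next_vtx_eq)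
  then have "cis (t0 / 2) * sgn (v0 - vp) = cis (- (s * c)) * u"
    unfolding half[symmetric] by (simp add: cis_mult mult.assoc[symmetric])
  have meet: "of_real (h / sin c) * cis (- (s * c))
      = of_real (h * cot c + h * cot c') + of_real (- h / sin c') * cis (s * c')"
    using sin_pos unfolding c_def c'_def t0_def t1_def by (intro fold_lines_meet[OF s]) auto
  define X where "X = v0 + of_real (h / sin c) * cis (t0 / 2) * sgn (v0 - vp)"
  have "X = v0 + of_real (h / sin c) * cis (- (s * c)) * u"
    unfolding X_def mult.assoc \<open>cis (t0 / 2) * sgn (v0 - vp) = _\<close> ..
  also have "\<dots> = v0 + of_real (h * cot c + h * cot c') * u + of_real (- h / sin c') * cis (s * c') * u"
    unfolding meet by (simp add: algebra_simps)
  also have "\<dots> = v1 + of_real (- h / sin c') * cis (t1 / 2) * u"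
    unfolding v1 half ..
  finally have X1: "X = v1 + of_real (- h / sin c') * cis (t1 / 2) * sgn (v1 - v0)"
    unfolding u_def .
  have small: "\<bar>h / sin c * sin (t0 / 2)\<bar> < w / 2" "\<bar>- h / sin c' * sin (t1 / 2)\<bar> < w / 2"
    using half s sin_pos h unfolding c_def c'_def t0_def t1_def by (auto simp: abs_mult)
  have "X \<in> fold_segment n p w i"
    unfolding X_def v0_def vp_def t0_def
    by (rule fold_segment_halfway_point)
      (use ne small(1) in \<open>simp_all add: v0_def v1_def vp_def t0_def next_vtx_eq\<close>)
  moreover have "prev_vtx n p (Suc i) = v0" unfolding prev_vtx_eq v0_def by simp
  then have "X \<in> fold_segment n p w (Suc i)"
    unfolding X1 v1_def t1_def
    by (metis fold_segment_halfway_point ne small(2) next_vtx_eq t1_def v1_def)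
  ultimately show ?thesis by blast
qed

lemma edge_length_ge_fold_width:
  assumes n: "n \<ge> 2" and fr: "folded_ribbon n p w" and nd: "nondegenerate n p"
    and s: "s = 1 \<or> s = -1" and i: "i < n"
    and t: "0 < s * turning_angle n p i" "s * turning_angle n p i < pi"
    and t': "0 < s * turning_angle n p (Suc i)" "s * turning_angle n p (Suc i) < pi"
  shows "w / 2 * (cot (s * turning_angle n p i / 2) + cot (s * turning_angle n p (Suc i) / 2))
           \<le> cmod (next_vtx n p i - vtx n p i)"
proof (rule ccontr)
  define c c' where "c = s * turning_angle n p i / 2" and "c' = s * turning_angle n p (Suc i) / 2"
  have sin_pos: "sin c > 0" "sin c' > 0"
    using t t' unfolding c_def c'_def by (auto intro!: sin_gt_zero)
  have cot_pos: "cot c > 0" "cot c' > 0"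
    using t t' sin_pos unfolding c_def c'_def cot_def by (auto intro!: divide_pos_pos cos_gt_zero_pi)
  define h where "h = cmod (next_vtx n p i - vtx n p i) / (cot c + cot c')"
  assume "\<not> ?thesis"
  then have "h < w / 2"
    using cot_pos unfolding h_def c_def c'_def by (simp add: field_simps)
  moreover have "0 < h"
    using cot_pos nd i unfolding h_def nondegenerate_def by auto
  moreover have "cmod (next_vtx n p i - vtx n p i) = h * cot c + h * cot c'"
    using cot_pos unfolding h_def distrib_left[symmetric] by simp
  ultimately have "fold_segment n p w i \<inter> fold_segment n p w (Suc i) \<noteq> {}"
    using fold_segments_meet[OF _ nd s] sin_pos n unfolding c_def c'_def by simp
  moreover have "Suc i mod n \<noteq> i" "Suc i mod n < n"
    using i n by (auto simp: mod_Suc)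
  ultimately show False
    using fr i unfolding folded_ribbon_def by (metis fold_segment_mod)
qed

section \<open>The lower bound\<close>

lemma convex_on_cot: "convex_on {0<..<pi/2} cot"
proof (rule convex_on_realI[where f' = "\<lambda>x. - inverse ((sin x)\<^sup>2)"])
  show "(cot has_real_derivative - inverse ((sin x)\<^sup>2)) (at x)" if "x \<in> {0<..<pi/2}" for x
  proof -
    have "0 < sin x" using that by (intro sin_gt_zero) auto
    then show ?thesis by (intro DERIV_cot) simp
  qed
  show "- inverse ((sin x)\<^sup>2) \<le> - inverse ((sin y)\<^sup>2)"
    if "x \<in> {0<..<pi/2}" "y \<in> {0<..<pi/2}" "x \<le> y" for x y
  proof -
    have "0 < sin x" "sin x \<le> sin y" using that by (auto intro: sin_gt_zero sin_monotone_2pi_le)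
    then show ?thesis by (simp add: power_mono le_imp_inverse_le)
  qed
qed simp

lemma cot_mean_le_mean_cot:
  fixes c :: "nat \<Rightarrow> real"
  assumes "n > 0" "\<And>i. i < n \<Longrightarrow> 0 < c i \<and> c i < pi / 2"
  shows "real n * cot ((\<Sum>i<n. c i) / real n) \<le> (\<Sum>i<n. cot (c i))"
proof -
  have "cot (\<Sum>i<n. (1 / real n) *\<^sub>R c i) \<le> (\<Sum>i<n. 1 / real n * cot (c i))"
    using assms by (intro convex_on_sum[OF _ _ convex_on_cot]) auto
  then have "cot ((\<Sum>i<n. c i) / real n) \<le> (\<Sum>i<n. cot (c i)) / real n"
    by (simp add: sum_divide_distrib)
  then show ?thesis
    using assms(1) by (simp add: pos_le_divide_eq mult.commute)
qed

theorem ribbonlength_ge: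
  assumes n: "n \<ge> 4" and adm: "admissible n p" and fr: "folded_ribbon n p w"
  shows "real n * cot (pi / real n) \<le> ribbonlength n p w"
proof -
  have simple: "simple_polygon n p" and nd: "nondegenerate n p"
    and angle: "\<And>i. i < n \<Longrightarrow> pi / 2 \<le> interior_angle n p i \<and> interior_angle n p i < pi"
    using adm unfolding admissible_def by auto
  define s where "s = sgn (signed_area n p)"
  define c where "c i = s * turning_angle n p i / 2" for i
  have interior: "interior_angle n p i = pi - s * turning_angle n p i" for i
    by (simp add: interior_angle_def s_def)
  have s: "s = 1 \<or> s = -1"
    using angle[of 0] n interior[of 0] unfolding s_def by (auto simp: sgn_if split: if_splits)
  have turn: "0 < s * turning_angle n p i \<and> s * turning_angle n p i \<le> pi / 2" if "i < n" for i
    using angle[OF that] unfolding interior by auto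
  have c_periodic: "c (k + n) = c k" for k
    by (simp add: c_def turning_angle_add_period)
  have "(\<Sum>i<n. c i) = s * (\<Sum>i<n. turning_angle n p i) / 2"
    by (simp add: c_def sum_distrib_left sum_divide_distrib)
  also have "s * (\<Sum>i<n. turning_angle n p i) = 2 * pi"
    using turning_sum_simple_polygon[OF n simple nd s] turn by fastforce
  finally have sum_c: "(\<Sum>i<n. c i) = pi" by simp
  have "w / 2 * (cot (c i) + cot (c (Suc i))) \<le> cmod (next_vtx n p i - vtx n p i)" if "i < n" for i
    unfolding c_def using turn[OF that] turn[of "Suc i mod n"] n that
    by (intro edge_length_ge_fold_width[OF _ fr nd s that]) auto
  then have "(\<Sum>i<n. w / 2 * (cot (c i) + cot (c (Suc i)))) \<le> polygon_length n p"
    unfolding polygon_length_def by (intro sum_mono) auto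
  moreover have "(\<Sum>i<n. w / 2 * (cot (c i) + cot (c (Suc i))))
      = w / 2 * ((\<Sum>i<n. cot (c i)) + (\<Sum>i<n. cot (c (Suc i))))"
    by (simp only: sum.distrib sum_distrib_left[symmetric])
  moreover have "(\<Sum>i<n. cot (c (Suc i))) = (\<Sum>i<n. cot (c i))"
    using sum_periodic_shift[of "\<lambda>i. cot (c i)" n 1] c_periodic by simp
  ultimately have "w * (\<Sum>i<n. cot (c i)) \<le> polygon_length n p"
    by simp
  moreover have "real n * cot (pi / real n) \<le> (\<Sum>i<n. cot (c i))"
    using cot_mean_le_mean_cot[of n c] sum_c turn n unfolding c_def by fastforce
  moreover have w: "w > 0" using fr unfolding folded_ribbon_def by simp
  ultimately have "w * (real n * cot (pi / real n)) \<le> polygon_length n p"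
    by (meson less_imp_le mult_left_mono order_trans)
  then show ?thesis
    using w unfolding ribbonlength_def by (simp add: pos_le_divide_eq mult.commute)
qed

section \<open>Regular polygons\<close>

lemma cis_sub_cis_minus: "cis x - cis (- x) = 2 * \<i> * of_real (sin x)"
  by (simp add: complex_eq_iff)

lemma sgn_scaled_unit: "a > 0 \<Longrightarrow> cmod z = 1 \<Longrightarrow> sgn (of_real a * z) = z"
  by (simp add: sgn_div_norm norm_mult scaleR_conv_of_real)

lemma cos_lt_cos_of_between:
  assumes "0 \<le> a" "a < x" "x < 2 * pi - a"
  shows "cos x < cos a"
proof (cases "x \<le> pi")
  case True
  then show ?thesis using assms by (intro cos_monotone_0_pi) auto
next
  case False
  have "cos x = cos (2 * pi - x)" by (simp add: cos_diff)
  also have "\<dots> < cos a" using assms False by (intro cos_monotone_0_pi) auto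
  finally show ?thesis .
qed

lemma closed_segment_inner_combination:
  fixes a b c e z :: "'a::real_inner"
  assumes "z \<in> closed_segment a b"
  obtains u where "0 \<le> u" "u \<le> 1" "z = (1 - u) *\<^sub>R a + u *\<^sub>R b"
    "inner (z - c) e = (1 - u) * inner (a - c) e + u * inner (b - c) e"
proof -
  obtain u where u: "0 \<le> u" "u \<le> 1" "z = (1 - u) *\<^sub>R a + u *\<^sub>R b"
    using assms unfolding closed_segment_def by auto
  moreover have "inner (z - c) e = (1 - u) * inner (a - c) e + u * inner (b - c) e"
    unfolding u(3) by (simp add: inner_diff_left algebra_simps)
  ultimately show ?thesis using that by blast
qed

lemma closed_segment_inner_eq_max:
  fixes a b c e z :: "'a::real_inner"
  assumes "z \<in> closed_segment a b" "inner (a - c) e \<le> M" "inner (b - c) e \<le> M"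
    "inner (a - c) e < M \<or> inner (b - c) e < M" "inner (z - c) e = M"
  shows "z = a \<and> inner (a - c) e = M \<or> z = b \<and> inner (b - c) e = M"
proof -
  obtain u where u: "0 \<le> u" "u \<le> 1" "z = (1 - u) *\<^sub>R a + u *\<^sub>R b"
    "inner (z - c) e = (1 - u) * inner (a - c) e + u * inner (b - c) e"
    by (rule closed_segment_inner_combination[OF assms(1)])
  consider "inner (a - c) e < M" | "inner (b - c) e < M" using assms(4) by blast
  then show ?thesis
  proof cases
    case 1
    then have "u = 1"
      using u assms(3,5) mult_strict_left_mono[OF 1, of "1 - u"] mult_left_mono[OF assms(3) u(1)]
      by (cases "u = 1") (auto simp: algebra_simps)
    then show ?thesis using u assms(5) by simp
  next
    case 2
    then have "u = 0"
      using u assms(2,5) mult_strict_left_mono[OF 2, of u] mult_left_mono[OF assms(2), of "1 - u"]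
      by (cases "u = 0") (auto simp: algebra_simps)
    then show ?thesis using u assms(5) by simp
  qed
qed

lemma infdist_affine_hull_2_ge:
  fixes a b e x :: "'a::real_inner"
  assumes "norm e = 1" "inner (a - b) e = 0"
  shows "\<bar>inner (x - b) e\<bar> \<le> infdist x (affine hull {a, b})"
proof -
  have "\<bar>inner (x - b) e\<bar> \<le> dist x z" if z_in: "z \<in> affine hull {a, b}" for z
  proof -
    obtain t where z: "z = a + t *\<^sub>R (b - a)"
      using z_in unfolding affine_hull_2_alt by auto
    have "inner (z - b) e = (1 - t) * inner (a - b) e"
      unfolding z by (simp add: inner_diff_left algebra_simps)
    then have "inner (x - b) e = inner (x - z) e"
      using assms(2) by (simp add: inner_diff_left)
    also have "\<bar>inner (x - z) e\<bar> \<le> norm (x - z)"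
      using Cauchy_Schwarz_ineq2[of "x - z" e] assms(1) by simp
    finally show ?thesis by (simp add: dist_norm)
  qed
  moreover have "affine hull {a, b} \<noteq> {}" by simp
  ultimately show ?thesis
    by (simp add: infdist_notempty cINF_greatest)
qed

lemma sin_cos_pi_mult_div_bounds:
  assumes "1 \<le> e" "e \<le> real n - 1"
  shows "sin (pi / real n) \<le> sin (pi * e / real n)" "\<bar>cos (pi * e / real n)\<bar> \<le> cos (pi / real n)"
proof -
  define x where "x = pi * e / real n"
  have np: "real n > 0" using assms by linarith
  have x1: "pi / real n \<le> x"
    using assms pi_gt_zero np unfolding x_def by (simp add: field_simps)
  have "pi * (1 + e) \<le> pi * real n"
    using assms by (intro mult_left_mono) auto
  then have x2: "x \<le> pi - pi / real n"
    using np unfolding x_def by (simp add: field_simps)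
  have pn: "0 < pi / real n" using np by simp
  show "sin (pi / real n) \<le> sin (pi * e / real n)"
  proof (cases "x \<le> pi / 2")
    case True
    then show ?thesis unfolding x_def[symmetric] using x1 pn by (intro sin_monotone_2pi_le) auto
  next
    case False
    have "sin (pi / real n) \<le> sin (pi - x)" using x2 False pn by (intro sin_monotone_2pi_le) auto
    then show ?thesis unfolding x_def[symmetric] by simp
  qed
  have "cos x \<le> cos (pi / real n)" "cos (pi - x) \<le> cos (pi / real n)"
    using x1 x2 pn by (auto intro!: cos_monotone_0_pi_le simp del: cos_pi_minus)
  then show "\<bar>cos (pi * e / real n)\<bar> \<le> cos (pi / real n)" unfolding x_def[symmetric] by auto
qed

text \<open>The point at distance \<open>y\<close> from the point of tangency on the tangent to the circle of
  radius \<open>r\<close> lies on the tangent turned by \<open>2 \<gamma>\<close> iff \<open>r cos (2 \<gamma>) - y sin (2 \<gamma>) = r\<close>.\<close>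
lemma tangent_intersection_bound:
  fixes r y \<gamma> a :: real
  assumes "r > 0" "r * cos (2 * \<gamma>) - y * sin (2 * \<gamma>) = r"
    and "0 < sin a" "sin a \<le> \<bar>sin \<gamma>\<bar>" "\<bar>cos \<gamma>\<bar> \<le> cos a"
  shows "r * sin a \<le> \<bar>y\<bar> * cos a"
proof -
  have "r * (sin \<gamma> * sin \<gamma>) = - (y * (sin \<gamma> * cos \<gamma>))"
    using assms(2) unfolding sin_double cos_double_sin power2_eq_square by (simp add: algebra_simps)
  then have "r * \<bar>sin \<gamma>\<bar> * \<bar>sin \<gamma>\<bar> = \<bar>y\<bar> * \<bar>cos \<gamma>\<bar> * \<bar>sin \<gamma>\<bar>"
    using assms(1) by (metis abs_minus_cancel abs_mult abs_of_pos mult.assoc mult.commute)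
  moreover have "sin \<gamma> \<noteq> 0" using assms(3,4) by auto
  ultimately have "r * \<bar>sin \<gamma>\<bar> = \<bar>y\<bar> * \<bar>cos \<gamma>\<bar>" by simp
  then show ?thesis
    using assms(1,4,5) mult_left_mono[OF assms(4), of r] mult_left_mono[OF assms(5), of "\<bar>y\<bar>"]
    by linarith
qed

locale regular_ngon =
  fixes n :: nat and p :: "nat \<Rightarrow> complex" and c :: complex and r \<theta> \<sigma> :: real
  assumes n: "n \<ge> 3" and r: "r > 0" and \<sigma>: "\<sigma> = 1 \<or> \<sigma> = -1"
    and vertex: "\<forall>i<n. p i = c + of_real r * cis (\<theta> + \<sigma> * 2 * pi * real i / real n)"
begin

definition \<beta> :: real where "\<beta> = \<sigma> * 2 * pi / real n"
definition \<phi> :: "nat \<Rightarrow> real" where "\<phi> k = \<theta> + real k * \<beta>"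
definition edge_dir :: "nat \<Rightarrow> complex" where "edge_dir k = \<i> * of_real \<sigma> * cis (\<phi> k + \<beta> / 2)"

lemma real_n_pos: "real n > 0"
  using n by simp

lemma pi_div_n_bounds: "0 < pi / real n" "pi / real n < pi / 2"
  using n by (auto simp: field_simps)

lemma sin_pi_div_n_pos: "sin (pi / real n) > 0"
  using pi_div_n_bounds pi_gt_zero by (intro sin_gt_zero) linarith+

lemma cos_pi_div_n_pos: "cos (pi / real n) > 0"
  using pi_div_n_bounds by (intro cos_gt_zero_pi) auto

lemma sin_half_\<beta>: "sin (\<beta> / 2) = \<sigma> * sin (pi / real n)"
  using \<sigma> unfolding \<beta>_def by auto

lemma cis_\<phi>_add_periods: "cis (\<phi> (k + n * q)) = cis (\<phi> k)"
proof -
  have "\<phi> (k + n * q) = \<phi> k + 2 * pi * (\<sigma> * real q)"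
    unfolding \<phi>_def \<beta>_def using real_n_pos by (simp add: field_simps)
  moreover have "\<sigma> * real q \<in> \<int>" using \<sigma> by auto
  ultimately show ?thesis by (simp add: cis_mult[symmetric])
qed

lemma vtx_eq: "vtx n p k = c + of_real r * cis (\<phi> k)"
proof -
  have "vtx n p k = c + of_real r * cis (\<phi> (k mod n))"
    using vertex n unfolding vtx_def \<phi>_def \<beta>_def by (simp add: field_simps)
  also have "cis (\<phi> (k mod n)) = cis (\<phi> k)"
    using cis_\<phi>_add_periods[of "k mod n" "k div n"] by simp
  finally show ?thesis .
qed

lemma norm_edge_dir: "cmod (edge_dir k) = 1"
  using \<sigma> by (auto simp: edge_dir_def norm_mult)

lemma edge_vector: "vtx n p (Suc k) - vtx n p k = of_real (2 * r * sin (pi / real n)) * edge_dir k"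
proof -
  have "\<phi> (Suc k) = \<phi> k + \<beta>" unfolding \<phi>_def by (simp add: algebra_simps)
  then have "cis (\<phi> (Suc k)) - cis (\<phi> k) = cis (\<phi> k + \<beta> / 2) * (cis (\<beta> / 2) - cis (- (\<beta> / 2)))"
    by (simp add: right_diff_distrib cis_mult add.assoc)
  then show ?thesis
    using \<sigma> unfolding vtx_eq edge_dir_def cis_sub_cis_minus sin_half_\<beta>
    by (auto simp: algebra_simps)
qed

lemma edge_dir_Suc: "edge_dir (Suc k) = edge_dir k * cis \<beta>"
  unfolding edge_dir_def \<phi>_def by (simp add: cis_mult algebra_simps)

lemma edge_dir_add_period: "edge_dir (k + n) = edge_dir k"
  using cis_\<phi>_add_periods[of k 1] unfolding edge_dir_def \<phi>_def
  by (simp add: cis_mult[symmetric] distrib_left)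

lemma prev_edge_dir: "edge_dir (k + n - 1) * cis \<beta> = edge_dir k"
  using edge_dir_Suc[of "k + n - 1"] edge_dir_add_period[of k] n by simp

lemma edge_dir_prev: "edge_dir (k + n - 1) = edge_dir k * cis (- \<beta>)"
proof -
  have "edge_dir (k + n - 1) = edge_dir (k + n - 1) * cis \<beta> * cis (- \<beta>)"
    by (simp add: mult.assoc cis_mult)
  then show ?thesis unfolding prev_edge_dir .
qed

lemma prev_vector: "vtx n p k - vtx n p (k + n - 1) = of_real (2 * r * sin (pi / real n)) * edge_dir (k + n - 1)"
  using edge_vector[of "k + n - 1"] n by simp

lemma Arg_cis_\<beta>: "Arg (cis \<beta>) = \<beta>"
proof (rule Arg_cis)
  have "\<bar>\<beta>\<bar> = 2 * pi / real n" using \<sigma> by (auto simp: \<beta>_def)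
  also have "\<dots> < pi" using n by (simp add: field_simps)
  finally show "\<beta> \<in> {-pi<..pi}" by auto
qed

lemma turning_angle_eq: "turning_angle n p k = \<beta>"
proof -
  have "edge_dir (k + n - 1) \<noteq> 0" using norm_edge_dir[of "k + n - 1"] by auto
  then have "edge_dir k / edge_dir (k + n - 1) = cis \<beta>"
    using prev_edge_dir[of k] by (auto simp: field_simps)
  then show ?thesis
    unfolding turning_angle_vtx edge_vector prev_vector
    using r sin_pi_div_n_pos by (simp add: Arg_cis_\<beta>)
qed

lemma polygon_length_eq: "polygon_length n p = real n * (2 * r * sin (pi / real n))"
  unfolding polygon_length_def next_vtx_eq edge_vector
  using r sin_pi_div_n_pos by (simp add: norm_mult norm_edge_dir)

lemma sum_cis_\<phi>: "(\<Sum>i<n. cis (\<phi> i)) = 0"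
proof -
  have "cis (\<phi> i) = cis \<theta> * cis \<beta> ^ i" for i
    unfolding \<phi>_def by (simp add: Complex.DeMoivre cis_mult)
  moreover have "cis \<beta> ^ n = 1" "cis \<beta> \<noteq> 1"
    using cis_\<phi>_add_periods[of 0 1] Arg_cis_\<beta> real_n_pos \<sigma>
    by (auto simp: \<phi>_def Complex.DeMoivre cis_mult[symmetric] \<beta>_def)
  ultimately show ?thesis by (simp add: sum_distrib_left[symmetric] sum_gp_strict)
qed

lemma signed_area_eq: "signed_area n p = \<sigma> * (real n * r\<^sup>2 * sin (2 * pi / real n) / 2)"
proof -
  have summand: "cnj (vtx n p i) * next_vtx n p i
      = cnj c * c + of_real r * cnj c * cis \<beta> * cis (\<phi> i) + of_real r * c * cnj (cis (\<phi> i))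
        + of_real (r\<^sup>2) * cis \<beta>" for i
  proof -
    have "cis (\<phi> (Suc i)) = cis (\<phi> i) * cis \<beta>"
      unfolding \<phi>_def by (simp add: cis_mult algebra_simps)
    moreover have "cnj (cis (\<phi> i)) * cis (\<phi> i) = 1"
      by (simp add: cis_cnj cis_mult)
    ultimately show ?thesis
      unfolding next_vtx_eq vtx_eq by (simp add: algebra_simps power2_eq_square)
  qed
  have "(\<Sum>i<n. cnj (cis (\<phi> i))) = 0"
    using sum_cis_\<phi> by (metis cnj_sum complex_cnj_zero)
  then have sum: "(\<Sum>i<n. cnj (vtx n p i) * next_vtx n p i) = of_nat n * (cnj c * c + of_real (r\<^sup>2) * cis \<beta>)"
    unfolding summand using sum_cis_\<phi> by (simp add: sum.distrib sum_distrib_left[symmetric] algebra_simps)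
  have "signed_area n p = Im (\<Sum>i<n. cnj (vtx n p i) * next_vtx n p i) / 2"
    unfolding signed_area_def by (simp add: Im_sum)
  also have "\<dots> = real n * r\<^sup>2 * sin \<beta> / 2"
    unfolding sum by simp
  also have "sin \<beta> = \<sigma> * sin (2 * pi / real n)"
    using \<sigma> unfolding \<beta>_def by auto
  finally show ?thesis by simp
qed

lemma sgn_signed_area: "sgn (signed_area n p) = \<sigma>"
proof -
  define A where "A = real n * r\<^sup>2 * sin (2 * pi / real n) / 2"
  have "2 * pi / real n < pi" using n by (simp add: field_simps)
  then have "A > 0"
    unfolding A_def using real_n_pos r by (intro divide_pos_pos mult_pos_pos sin_gt_zero) auto
  then show ?thesis using \<sigma> unfolding signed_area_eq A_def[symmetric] by (auto simp: sgn_if)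
qed

lemma interior_angle_eq: "interior_angle n p k = pi - 2 * pi / real n"
  unfolding interior_angle_def sgn_signed_area turning_angle_eq \<beta>_def using \<sigma> by auto

lemma nondegenerate: "nondegenerate n p"
proof -
  have "vtx n p (Suc i) \<noteq> vtx n p i" for i
    using edge_vector[of i] r sin_pi_div_n_pos norm_edge_dir[of i] by auto
  moreover have "2 * pi / real n \<noteq> 0" using real_n_pos by simp
  ultimately show ?thesis
    unfolding nondegenerate_def next_vtx_eq interior_angle_eq by simp
qed

text \<open>Height above the centre in the direction of the midpoint of edge \<open>i\<close>: it attains its
  maximum \<open>r cos (\<pi> / n)\<close> over the vertices exactly at the two ends of edge \<open>i\<close>.\<close>
definition height :: "nat \<Rightarrow> complex \<Rightarrow> real" where
  "height i z = inner (z - c) (cis (\<phi> i + \<beta> / 2))"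

lemma height_vtx: "height i (vtx n p (i + j)) = r * cos ((2 * real j - 1) * pi / real n)"
proof -
  have "height i (vtx n p (i + j)) = r * cos (\<phi> (i + j) - (\<phi> i + \<beta> / 2))"
    unfolding height_def vtx_eq by (simp add: inner_complex_def cos_diff algebra_simps)
  also have "\<phi> (i + j) - (\<phi> i + \<beta> / 2) = \<sigma> * ((2 * real j - 1) * pi / real n)"
    unfolding \<phi>_def \<beta>_def using real_n_pos by (simp add: field_simps)
  finally show ?thesis using \<sigma> by auto
qed

lemma height_vtx_max: "height i (vtx n p i) = r * cos (pi / real n)"
  "height i (vtx n p (Suc i)) = r * cos (pi / real n)"
  using height_vtx[of i 0] height_vtx[of i 1] by simp_all

lemma height_vtx_lt:
  assumes "2 \<le> j" "j \<le> n - 1"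
  shows "height i (vtx n p (i + j)) < r * cos (pi / real n)"
proof -
  have "cos ((2 * real j - 1) * pi / real n) < cos (pi / real n)"
  proof (rule cos_lt_cos_of_between)
    show "pi / real n < (2 * real j - 1) * pi / real n" "0 \<le> pi / real n"
      using assms real_n_pos by (auto simp: field_simps)
    have "2 * real j - 1 < 2 * real n - 1" using assms n by linarith
    then show "(2 * real j - 1) * pi / real n < 2 * pi - pi / real n"
      using real_n_pos by (simp add: field_simps)
  qed
  then show ?thesis unfolding height_vtx using r by simp
qed

lemma height_edge:
  assumes "z \<in> edge n p i"
  shows "height i z = r * cos (pi / real n)"
proof -
  obtain u where "height i z = (1 - u) * height i (vtx n p i) + u * height i (vtx n p (Suc i))"
    using assms unfolding edge_def next_vtx_eq height_def by (rule closed_segment_inner_combination)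
  then show ?thesis unfolding height_vtx_max by (simp add: algebra_simps)
qed

lemma edge_inter_edge_add:
  assumes j: "1 \<le> j" "j \<le> n - 1"
  shows "edge n p i \<inter> edge n p (i + j)
    = (if j = 1 then {vtx n p (Suc i)} else if j = n - 1 then {vtx n p i} else {})"
proof -
  define A B M where "A = vtx n p (i + j)" and "B = vtx n p (i + Suc j)" and "M = r * cos (pi / real n)"
  have A: "A = vtx n p (Suc i)" if "j = 1" using that by (simp add: A_def)
  have B: "B = vtx n p i" if "j = n - 1" using that n by (simp add: B_def)
  have hA: "height i A \<le> M \<and> (height i A = M \<longleftrightarrow> j = 1)"
    using height_vtx_max(2)[of i] height_vtx_lt[of j i] j A unfolding A_def M_def
    by (cases "j = 1") auto
  have hB: "height i B \<le> M \<and> (height i B = M \<longleftrightarrow> j = n - 1)"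
    using height_vtx_max(1)[of i] height_vtx_lt[of "Suc j" i] j B unfolding B_def M_def
    by (cases "j = n - 1") auto
  have "\<not> (j = 1 \<and> j = n - 1)" using n by auto
  show ?thesis
  proof (intro equalityI subsetI)
    fix z assume z: "z \<in> edge n p i \<inter> edge n p (i + j)"
    then have "z \<in> closed_segment A B" unfolding A_def B_def edge_def next_vtx_eq by simp
    then have "z = A \<and> height i A = M \<or> z = B \<and> height i B = M"
      using closed_segment_inner_eq_max[of z A B c "cis (\<phi> i + \<beta> / 2)" M]
        height_edge[of z i] z hA hB \<open>\<not> (j = 1 \<and> j = n - 1)\<close>
      unfolding height_def M_def by force
    then show "z \<in> (if j = 1 then {vtx n p (Suc i)} else if j = n - 1 then {vtx n p i} else {})"
      using hA hB A B \<open>\<not> (j = 1 \<and> j = n - 1)\<close> by auto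
  next
    fix z assume z: "z \<in> (if j = 1 then {vtx n p (Suc i)} else if j = n - 1 then {vtx n p i} else {})"
    have "vtx n p (Suc i) \<in> edge n p i" "vtx n p i \<in> edge n p i"
      by (simp_all add: edge_def next_vtx_eq)
    moreover have "A \<in> edge n p (i + j)" "B \<in> edge n p (i + j)"
      unfolding A_def B_def by (simp_all add: edge_def next_vtx_eq)
    ultimately show "z \<in> edge n p i \<inter> edge n p (i + j)"
      using z A B by (auto split: if_splits)
  qed
qed

lemma simple_polygon: "simple_polygon n p"
  unfolding simple_polygon_def
proof (intro conjI allI impI)
  fix I J assume I: "I < n" and J: "J < n" and ne: "I \<noteq> J"
  define j where "j = (if I < J then J - I else J + n - I)"
  have j: "1 \<le> j" "j \<le> n - 1" using I J ne by (auto simp: j_def)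
  have "edge n p (J + n) = edge n p J"
    by (metis edge_mod mod_add_self2)
  then have "edge n p J = edge n p (I + j)"
    using I J by (auto simp: j_def)
  then have inter: "edge n p I \<inter> edge n p J
      = (if j = 1 then {vtx n p (Suc I)} else if j = n - 1 then {vtx n p I} else {})"
    using edge_inter_edge_add[OF j, of I] by simp
  have adj: "J = Suc I mod n \<longleftrightarrow> j = 1" "I = Suc J mod n \<longleftrightarrow> j = n - 1"
    using I J ne n by (auto simp: j_def mod_Suc)
  show "if J = Suc I mod n then edge n p I \<inter> edge n p J = {vtx n p J}
      else if I = Suc J mod n then edge n p I \<inter> edge n p J = {vtx n p I}
      else edge n p I \<inter> edge n p J = {}"
  proof (cases "j = 1")
    case True
    then have "vtx n p J = vtx n p (Suc I)" using adj(1) vtx_mod by metis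
    then show ?thesis using True inter adj by simp
  next
    case False
    then show ?thesis using inter adj by simp
  qed
qed (rule n)

definition width :: real where "width = 2 * r * sin (pi / real n) * tan (pi / real n)"

lemma bisector_eq: "bisector n p k = - of_real (2 * sin (pi / real n)) * cis (\<phi> k)"
proof -
  have pos: "2 * r * sin (pi / real n) > 0" using r sin_pi_div_n_pos by simp
  have "sgn (next_vtx n p k - vtx n p k) = edge_dir k"
    unfolding next_vtx_eq edge_vector by (rule sgn_scaled_unit[OF pos norm_edge_dir])
  moreover have "sgn (prev_vtx n p k - vtx n p k) = - edge_dir (k + n - 1)"
    using sgn_scaled_unit[OF pos norm_edge_dir[of "k + n - 1"]] prev_vector[of k]
    unfolding prev_vtx_eq by (metis minus_diff_eq sgn_minus)
  moreover have "edge_dir k * (1 - cis (- \<beta>)) = - of_real (2 * sin (pi / real n)) * cis (\<phi> k)"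
  proof -
    have "edge_dir k * (1 - cis (- \<beta>)) = \<i> * of_real \<sigma> * cis (\<phi> k) * (cis (\<beta> / 2) - cis (- (\<beta> / 2)))"
      unfolding edge_dir_def by (simp add: algebra_simps cis_mult)
    then show ?thesis
      using \<sigma> unfolding cis_sub_cis_minus sin_half_\<beta> by (auto simp: algebra_simps)
  qed
  ultimately show ?thesis
    unfolding bisector_def edge_dir_prev by (simp add: algebra_simps)
qed

text \<open>The fold lines of a regular polygon are the tangents to its circumcircle.\<close>
lemma fold_line_eq: "x \<in> fold_line n p k \<longleftrightarrow> Re ((x - c) * cnj (cis (\<phi> k))) = r"
proof -
  have "inner (x - vtx n p k) (bisector n p k)
      = - (2 * sin (pi / real n)) * (Re ((x - c) * cnj (cis (\<phi> k))) - r)"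
    unfolding bisector_eq inner_complex_eq_Re vtx_eq by (simp add: cis_cnj cis_mult algebra_simps)
  then show ?thesis unfolding fold_line_def using sin_pi_div_n_pos by auto
qed

lemma fold_segment_width_bound:
  assumes "x \<in> fold_segment n p width k"
  shows "\<bar>Im ((x - c) * cnj (cis (\<phi> k)))\<bar> < r * tan (pi / real n)"
proof -
  define y where "y = Im ((x - c) * cnj (cis (\<phi> k)))"
  define e where "e = \<i> * edge_dir (k + n - 1)"
  have "Re ((x - c) * cnj (cis (\<phi> k))) = r"
    using assms fold_line_eq unfolding fold_segment_def by auto
  then have "(x - c) * cnj (cis (\<phi> k)) = of_real r + \<i> * of_real y"
    unfolding y_def by (simp add: complex_eq_iff)
  moreover have "x - c = ((x - c) * cnj (cis (\<phi> k))) * cis (\<phi> k)"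
    by (simp add: cis_cnj mult.assoc cis_mult)
  ultimately have "x - vtx n p k = \<i> * of_real y * cis (\<phi> k)"
    unfolding vtx_eq by (simp add: algebra_simps)
  moreover have "e = - of_real \<sigma> * cis (\<phi> k - \<beta> / 2)"
  proof -
    have "\<phi> k + \<beta> / 2 + - \<beta> = \<phi> k - \<beta> / 2" by simp
    then have "cis (\<phi> k + \<beta> / 2) * cis (- \<beta>) = cis (\<phi> k - \<beta> / 2)"
      by (simp only: cis_mult)
    then show ?thesis
      unfolding e_def edge_dir_prev unfolding edge_dir_def by (simp add: algebra_simps)
  qed
  moreover have "cis (\<phi> k) * cis (- (\<phi> k - \<beta> / 2)) = cis (\<beta> / 2)"
    by (simp add: cis_mult)
  ultimately have "(x - vtx n p k) * cnj e = - \<i> * of_real (\<sigma> * y) * cis (\<beta> / 2)"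
    by (simp add: cis_cnj algebra_simps)
  then have "inner (x - vtx n p k) e = \<sigma> * y * sin (\<beta> / 2)"
    unfolding inner_complex_eq_Re by simp
  also have "\<dots> = y * sin (pi / real n)"
    using \<sigma> unfolding sin_half_\<beta> by auto
  finally have "inner (x - vtx n p k) e = y * sin (pi / real n)" .
  moreover have "inner (prev_vtx n p k - vtx n p k) e = 0"
    unfolding e_def prev_vtx_eq using prev_vector[of k]
    by (simp add: inner_complex_eq_Re algebra_simps)
  moreover have "norm e = 1" unfolding e_def by (simp add: norm_mult norm_edge_dir)
  ultimately have "\<bar>y\<bar> * sin (pi / real n) \<le> infdist x (affine hull {prev_vtx n p k, vtx n p k})"
    using infdist_affine_hull_2_ge[of e "prev_vtx n p k" "vtx n p k" x] sin_pi_div_n_pos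
    by (simp add: abs_mult)
  also have "\<dots> < r * sin (pi / real n) * tan (pi / real n)"
    using assms unfolding fold_segment_def width_def by simp
  finally show ?thesis
    unfolding y_def[symmetric] using sin_pi_div_n_pos by (simp add: mult.commute mult.left_commute)
qed

text \<open>Two tangents meeting at angle \<open>2 \<gamma>\<close> intersect at distance \<open>r \<bar>tan \<gamma>\<bar> \<ge> r tan (\<pi> / n)\<close>
  from the points of tangency, which is outside both fold segments.\<close>
lemma fold_segments_disjoint:
  assumes i: "i < n" and j: "j < n" and ne: "i \<noteq> j"
  shows "fold_segment n p width i \<inter> fold_segment n p width j = {}"
proof (rule ccontr)
  assume "fold_segment n p width i \<inter> fold_segment n p width j \<noteq> {}"
  then obtain x where xi: "x \<in> fold_segment n p width i" and xj: "x \<in> fold_segment n p width j"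
    by blast
  define y \<gamma> where "y = Im ((x - c) * cnj (cis (\<phi> i)))" and "\<gamma> = (\<phi> i - \<phi> j) / 2"
  have y: "\<bar>y\<bar> < r * tan (pi / real n)"
    using fold_segment_width_bound[OF xi] unfolding y_def .
  have "(x - c) * cnj (cis (\<phi> i)) = Complex r y"
    using xi fold_line_eq unfolding fold_segment_def y_def by (simp add: complex_eq_iff)
  moreover have "(x - c) * cnj (cis (\<phi> j)) = (x - c) * cnj (cis (\<phi> i)) * cis (2 * \<gamma>)"
  proof -
    have "2 * \<gamma> = \<phi> i - \<phi> j" unfolding \<gamma>_def by simp
    then show ?thesis by (simp add: cis_cnj cis_mult mult.assoc)
  qed
  moreover have "Re ((x - c) * cnj (cis (\<phi> j))) = r"
    using xj fold_line_eq unfolding fold_segment_def by auto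
  ultimately have "r * cos (2 * \<gamma>) - y * sin (2 * \<gamma>) = r" by simp
  moreover define e where "e = \<bar>real i - real j\<bar>"
  have e: "1 \<le> e" "e \<le> real n - 1" using i j ne unfolding e_def by auto
  have "\<gamma> = \<sigma> * (pi * (real i - real j) / real n)"
    using real_n_pos unfolding \<gamma>_def \<phi>_def \<beta>_def by (simp add: field_simps)
  then have "\<bar>\<gamma>\<bar> = pi * e / real n"
    using \<sigma> real_n_pos unfolding e_def by (auto simp: abs_mult)
  then have "\<gamma> = pi * e / real n \<or> \<gamma> = - (pi * e / real n)"
    by (auto simp: abs_eq_iff)
  then have "\<bar>sin \<gamma>\<bar> = \<bar>sin (pi * e / real n)\<bar>" "\<bar>cos \<gamma>\<bar> = \<bar>cos (pi * e / real n)\<bar>"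
    by auto
  then have "sin (pi / real n) \<le> \<bar>sin \<gamma>\<bar>" "\<bar>cos \<gamma>\<bar> \<le> cos (pi / real n)"
    using sin_cos_pi_mult_div_bounds[OF e] by auto
  ultimately have "r * sin (pi / real n) \<le> \<bar>y\<bar> * cos (pi / real n)"
    using tangent_intersection_bound r sin_pi_div_n_pos by blast
  also have "\<dots> < r * tan (pi / real n) * cos (pi / real n)"
    using y cos_pi_div_n_pos by (intro mult_strict_right_mono) auto
  also have "\<dots> = r * sin (pi / real n)"
    using cos_pi_div_n_pos by (simp add: tan_def)
  finally show False by simp
qed

lemma regular_ngon_optimal:
  assumes "n \<ge> 4"
  shows "admissible n p \<and> folded_ribbon n p width \<and> ribbonlength n p width = real n * cot (pi / real n)"
proof (intro conjI)
  have "2 * pi / real n \<le> pi / 2" using assms by (simp add: field_simps)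
  then show "admissible n p"
    using simple_polygon nondegenerate real_n_pos unfolding admissible_def interior_angle_eq by simp
  have tan_pos: "tan (pi / real n) > 0"
    using sin_pi_div_n_pos cos_pi_div_n_pos by (simp add: tan_def)
  then show "folded_ribbon n p width"
    using r sin_pi_div_n_pos fold_segments_disjoint unfolding folded_ribbon_def width_def by simp
  show "ribbonlength n p width = real n * cot (pi / real n)"
    using r sin_pi_div_n_pos cos_pi_div_n_pos
    unfolding ribbonlength_def polygon_length_eq width_def tan_def cot_def by (simp add: field_simps)
qed

end

theorem corollary6p6:
  fixes n :: nat
  assumes "n \<ge> 4"
  shows "Inf {ribbonlength n p w | p w. admissible n p \<and> folded_ribbon n p w}
           = real n * cot (pi / real n)
       \<and> (\<forall>p. regular_polygon n p \<longrightarrow>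
            (\<exists>w. admissible n p \<and> folded_ribbon n p w
                 \<and> ribbonlength n p w = real n * cot (pi / real n)))"
proof
  show attained: "\<forall>p. regular_polygon n p \<longrightarrow>
      (\<exists>w. admissible n p \<and> folded_ribbon n p w \<and> ribbonlength n p w = real n * cot (pi / real n))"
  proof (intro allI impI)
    fix p assume "regular_polygon n p"
    then obtain c r \<theta> \<sigma> where "regular_ngon n p c r \<theta> \<sigma>"
      using assms unfolding regular_polygon_def regular_ngon_def by auto
    then show "\<exists>w. admissible n p \<and> folded_ribbon n p w \<and> ribbonlength n p w = real n * cot (pi / real n)"
      using regular_ngon.regular_ngon_optimal assms by blast
  qed
  have "regular_polygon n (\<lambda>i. cis (2 * pi * real i / real n))"
    unfolding regular_polygon_def
    by (rule exI[of _ 0], rule exI[of _ 1], rule exI[of _ 0], rule exI[of _ 1]) simp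
  then have "\<exists>p w. real n * cot (pi / real n) = ribbonlength n p w \<and> admissible n p \<and> folded_ribbon n p w"
    using attained by metis
  then show "Inf {ribbonlength n p w | p w. admissible n p \<and> folded_ribbon n p w}
      = real n * cot (pi / real n)"
    using ribbonlength_ge[OF assms] by (intro cInf_eq_minimum) (simp only: mem_Collect_eq, blast)
qed

end
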